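(* Let $a<c<b<d$ be integers, so that the finite arcs $(a,b)$ and $(c,d)$ cross. Then there are non-split short exact sequences in $\mathcal{C}_2$ \[ 0\to(a,b)\xrightarrow{f}(c,b)\oplus(a,d)\xrightarrow{g}(c,d)\to0,\qquad 0\to(c,d)\xrightarrow{f'}(a,c)\oplus(b,d)\xrightarrow{g'}(a,b)\to0. \]
   Context: Let $R=\mathbb{C}[x,y]/(x^2)$, graded with $\deg x=1$, $\deg y=-1$; $M(j)_n=M_{j+n}$. $\mathcal{C}_2$ is the exact category of finitely generated $\mathbb{Z}$-graded maximal Cohen–Macaulay $R$-modules with degree-preserving morphisms. An arc is a pair $(a,b)$ with $a\in\mathbb{Z}\cup\{-\infty\}$, $b\in\mathbb{Z}$, $a<b$; a finite arc $(a,b)$ ($a\in\mathbb{Z}$) denotes the module $(x,y^{b-a-1})(1-b)$ (where $(x,y^0)=R$), and an infinite arc $(-\infty,b)$ denotes $\mathbb{C}[y](-b)=(R/(x))(-b)$. *)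

theory Defs
  imports "HOL-Computational_Algebra.Polynomial"
begin

text \<open>
  The ring R = C[x,y]/(x^2).  An element p(y) + x q(y) of R is represented
  by the pair (p, q) of complex polynomials in y.  Grading: deg x = 1, deg y = -1.
\<close>

type_synonym relt = "complex poly \<times> complex poly"

definition radd :: "relt \<Rightarrow> relt \<Rightarrow> relt" where
  "radd r s = (fst r + fst s, snd r + snd s)"

definition rmul :: "relt \<Rightarrow> relt \<Rightarrow> relt" where
  "rmul r s = (fst r * fst s, fst r * snd s + snd r * fst s)"

definition rsmul :: "complex \<Rightarrow> relt \<Rightarrow> relt" where
  "rsmul c r = (smult c (fst r), smult c (snd r))"

definition rx :: relt where "rx = (0, 1)"
definition ry :: relt where "ry = ([:0, 1:], 0)"
definition rypow :: "nat \<Rightarrow> relt" where "rypow k = (monom 1 k, 0)"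

definition R_hom :: "int \<Rightarrow> relt set" where
  "R_hom n = {r. (\<forall>i. coeff (fst r) i \<noteq> 0 \<longrightarrow> - int i = n)
              \<and> (\<forall>i. coeff (snd r) i \<noteq> 0 \<longrightarrow> 1 - int i = n)}"

definition ideal_xy :: "nat \<Rightarrow> relt set" where
  "ideal_xy k = {radd (rmul r rx) (rmul s (rypow k)) | r s. True}"

text \<open>
  A graded module is given
  by its homogeneous components (all living in an ambient type 'e), C-vector space
  operations, and the actions of x (degree +1) and y (degree -1).
\<close>
record 'e gmod =
  comp :: "int \<Rightarrow> 'e set"
  gadd :: "'e \<Rightarrow> 'e \<Rightarrow> 'e"
  gsmul :: "complex \<Rightarrow> 'e \<Rightarrow> 'e"
  gzero :: 'e
  actx :: "'e \<Rightarrow> 'e"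
  acty :: "'e \<Rightarrow> 'e"

definition shifted_submod :: "relt set \<Rightarrow> int \<Rightarrow> relt gmod" where
  "shifted_submod I j = \<lparr> comp = (\<lambda>n. I \<inter> R_hom (j + n)), gadd = radd, gsmul = rsmul,
       gzero = (0, 0), actx = rmul rx, acty = rmul ry \<rparr>"

text \<open>The finite arc (a,b), a < b: the module (x, y^(b-a-1))(1-b).\<close>
definition arc :: "int \<Rightarrow> int \<Rightarrow> relt gmod" where
  "arc a b = shifted_submod (ideal_xy (nat (b - a - 1))) (1 - b)"

definition dsum :: "'a gmod \<Rightarrow> 'b gmod \<Rightarrow> ('a \<times> 'b) gmod" where
  "dsum M N = \<lparr> comp = (\<lambda>n. comp M n \<times> comp N n),
       gadd = (\<lambda>u v. (gadd M (fst u) (fst v), gadd N (snd u) (snd v))),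
       gsmul = (\<lambda>c u. (gsmul M c (fst u), gsmul N c (snd u))),
       gzero = (gzero M, gzero N),
       actx = (\<lambda>u. (actx M (fst u), actx N (snd u))),
       acty = (\<lambda>u. (acty M (fst u), acty N (snd u))) \<rparr>"

definition gmod_hom :: "'a gmod \<Rightarrow> 'b gmod \<Rightarrow> (int \<Rightarrow> 'a \<Rightarrow> 'b) \<Rightarrow> bool" where
  "gmod_hom M N f \<longleftrightarrow>
     (\<forall>n. \<forall>m\<in>comp M n. f n m \<in> comp N n) \<and>
     (\<forall>n. \<forall>m1\<in>comp M n. \<forall>m2\<in>comp M n. f n (gadd M m1 m2) = gadd N (f n m1) (f n m2)) \<and>
     (\<forall>n c. \<forall>m\<in>comp M n. f n (gsmul M c m) = gsmul N c (f n m)) \<and>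
     (\<forall>n. \<forall>m\<in>comp M n. f (n + 1) (actx M m) = actx N (f n m)) \<and>
     (\<forall>n. \<forall>m\<in>comp M n. f (n - 1) (acty M m) = acty N (f n m))"

definition short_exact :: "'a gmod \<Rightarrow> 'b gmod \<Rightarrow> 'c gmod \<Rightarrow>
    (int \<Rightarrow> 'a \<Rightarrow> 'b) \<Rightarrow> (int \<Rightarrow> 'b \<Rightarrow> 'c) \<Rightarrow> bool" where
  "short_exact A B C f g \<longleftrightarrow> gmod_hom A B f \<and> gmod_hom B C g \<and>
     (\<forall>n. inj_on (f n) (comp A n)) \<and>
     (\<forall>n. {b \<in> comp B n. g n b = gzero C} = f n ` comp A n) \<and>
     (\<forall>n. g n ` comp B n = comp C n)"

definition ses_splits :: "'a gmod \<Rightarrow> 'b gmod \<Rightarrow> (int \<Rightarrow> 'a \<Rightarrow> 'b) \<Rightarrow> bool" where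
  "ses_splits A B f \<longleftrightarrow> (\<exists>r. gmod_hom B A r \<and> (\<forall>n. \<forall>m\<in>comp A n. r n (f n m) = m))"

end

theory Submission
  imports Defs
begin

text \<open>
  In degree n the arc (a,b) consists of the elements \<alpha> y^(b-1-n) + \<beta> x y^(b-n) with \<alpha> = 0 above
  degree a and \<beta> = 0 above degree b.  In these coordinates all maps of both sequences are sums
  of multiplications by elements of R[y^-1], and exactness is a degreewise computation.

  For non-splitting, look at the \<alpha>-coordinate in degree a of the image of u under a graded map
  from an arc (a',b') to (a,b).  It vanishes if the \<alpha>-coordinate of u does, because then x u = 0
  and x is injective on \<alpha>-parts.  It also vanishes unless a' \<le> a and b' \<le> b: if a < a', then u is
  divisible by y from degree a+1, where (a,b) has no \<alpha>-part; if b < b', then x u lies in the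
  x-part of (a',b'), which is divisible by y from degree b+1, where (a,b) vanishes.  In both
  sequences every summand of the middle term fails this test on the image of the generator
  y^(b-1-a) of (a,b), so no retraction can give that generator back.
\<close>

text \<open>\<^term>\<open>arc_elt b n \<alpha> \<beta>\<close> stands for \<alpha> y^(b-1-n) + \<beta> x y^(b-n), the general element of degree n
  of an arc with right end b.\<close>

definition arc_elt :: "int \<Rightarrow> int \<Rightarrow> complex \<Rightarrow> complex \<Rightarrow> relt" where
  "arc_elt b n \<alpha> \<beta> = (monom \<alpha> (nat (b - 1 - n)), monom \<beta> (nat (b - n)))"

definition ycoeff :: "int \<Rightarrow> int \<Rightarrow> relt \<Rightarrow> complex" where
  "ycoeff b n m = coeff (fst m) (nat (b - 1 - n))"

definition xcoeff :: "int \<Rightarrow> int \<Rightarrow> relt \<Rightarrow> complex" where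
  "xcoeff b n m = coeff (snd m) (nat (b - n))"

lemma ycoeff_arc_elt [simp]: "ycoeff b n (arc_elt b n \<alpha> \<beta>) = \<alpha>"
  by (simp add: ycoeff_def arc_elt_def)

lemma xcoeff_arc_elt [simp]: "xcoeff b n (arc_elt b n \<alpha> \<beta>) = \<beta>"
  by (simp add: xcoeff_def arc_elt_def)

lemma ycoeff_simps [simp]:
  "ycoeff b n (0, 0) = 0" "ycoeff b n (radd u v) = ycoeff b n u + ycoeff b n v"
  by (simp_all add: ycoeff_def radd_def)

lemma arc_elt_eq_iff [simp]: "arc_elt b n \<alpha> \<beta> = arc_elt b n \<alpha>' \<beta>' \<longleftrightarrow> \<alpha> = \<alpha>' \<and> \<beta> = \<beta>'"
  by (simp add: arc_elt_def)

lemma arc_elt_0_0 [simp]: "arc_elt b n 0 0 = (0, 0)"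
  by (simp add: arc_elt_def)

lemma arc_elt_eq_0_iff [simp]: "arc_elt b n \<alpha> \<beta> = (0, 0) \<longleftrightarrow> \<alpha> = 0 \<and> \<beta> = 0"
  by (simp add: arc_elt_def)

lemma radd_arc_elt [simp]:
  "radd (arc_elt b n \<alpha> \<beta>) (arc_elt b n \<alpha>' \<beta>') = arc_elt b n (\<alpha> + \<alpha>') (\<beta> + \<beta>')"
  by (simp add: arc_elt_def radd_def add_monom)

lemma rsmul_arc_elt [simp]: "rsmul c (arc_elt b n \<alpha> \<beta>) = arc_elt b n (c * \<alpha>) (c * \<beta>)"
  by (simp add: arc_elt_def rsmul_def smult_monom)

lemma rx_mult_arc_elt [simp]: "rmul rx (arc_elt b n \<alpha> \<beta>) = arc_elt b (n + 1) 0 \<alpha>"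
  by (simp add: arc_elt_def rmul_def rx_def algebra_simps)

lemma ry_mult_arc_elt:
  assumes "\<alpha> = 0 \<or> n < b" and "\<beta> = 0 \<or> n \<le> b"
  shows "rmul ry (arc_elt b n \<alpha> \<beta>) = arc_elt b (n - 1) \<alpha> \<beta>"
proof -
  have "n < b \<Longrightarrow> nat (b - n) = Suc (nat (b - 1 - n))"
    and "n \<le> b \<Longrightarrow> nat (b - (n - 1)) = Suc (nat (b - n))" by simp_all
  then show ?thesis
    using assms by (auto simp: arc_elt_def rmul_def ry_def monom_Suc)
qed

lemma relt_zero_simps [simp]:
  "radd (0, 0) u = u" "radd u (0, 0) = u" "rsmul c (0, 0) = (0, 0)" "rmul r (0, 0) = (0, 0)"
  by (simp_all add: radd_def rsmul_def rmul_def)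

lemma mem_ideal_xy_iff: "m \<in> ideal_xy k \<longleftrightarrow> monom 1 k dvd fst m"
proof
  assume "m \<in> ideal_xy k"
  then show "monom 1 k dvd fst m"
    by (auto simp: ideal_xy_def radd_def rmul_def rx_def rypow_def)
next
  assume "monom 1 k dvd fst m"
  then obtain t where "fst m = monom 1 k * t" by (elim dvdE)
  then have "m = radd (rmul (snd m, 0) rx) (rmul (t, 0) (rypow k))"
    by (cases m) (simp add: radd_def rmul_def rx_def rypow_def mult.commute)
  then show "m \<in> ideal_xy k" unfolding ideal_xy_def by blast
qed

lemma mem_arc_iff:
  "m \<in> comp (arc a b) n \<longleftrightarrow>
     (\<forall>i. coeff (fst m) i \<noteq> 0 \<longrightarrow> int i = b - 1 - n \<and> b - a - 1 \<le> int i) \<and>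
     (\<forall>i. coeff (snd m) i \<noteq> 0 \<longrightarrow> int i = b - n)"
  by (auto simp: arc_def shifted_submod_def R_hom_def mem_ideal_xy_iff monom_1_dvd_iff')
    (metis linorder_not_le zless_nat_eq_int_zless)

lemma arc_elt_mem_arc_iff:
  assumes "a < b"
  shows "arc_elt b n \<alpha> \<beta> \<in> comp (arc a b) n \<longleftrightarrow> (a < n \<longrightarrow> \<alpha> = 0) \<and> (b < n \<longrightarrow> \<beta> = 0)"
  using assms by (auto simp: mem_arc_iff arc_elt_def coeff_monom split: if_splits)

lemma arc_elt_coeffs:
  assumes "m \<in> comp (arc a b) n"
  shows "arc_elt b n (ycoeff b n m) (xcoeff b n m) = m"
proof -
  have "fst m = monom (ycoeff b n m) (nat (b - 1 - n))"
    using assms by (intro poly_eqI) (force simp: mem_arc_iff ycoeff_def coeff_monom)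
  moreover have "snd m = monom (xcoeff b n m) (nat (b - n))"
    using assms by (intro poly_eqI) (force simp: mem_arc_iff xcoeff_def coeff_monom)
  ultimately show ?thesis by (simp add: arc_elt_def prod_eq_iff)
qed

lemma arc_memE:
  assumes "a < b" and "m \<in> comp (arc a b) n"
  obtains \<alpha> \<beta> where "m = arc_elt b n \<alpha> \<beta>" and "a < n \<longrightarrow> \<alpha> = 0" and "b < n \<longrightarrow> \<beta> = 0"
  by (metis assms arc_elt_coeffs arc_elt_mem_arc_iff)

lemma zero_mem_arc [simp]: "a < b \<Longrightarrow> (0, 0) \<in> comp (arc a b) n"
  using arc_elt_mem_arc_iff[of a b n 0 0] by simp

lemma radd_mem_arc:
  assumes "a < b" and "u \<in> comp (arc a b) n" and "v \<in> comp (arc a b) n"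
  shows "radd u v \<in> comp (arc a b) n"
proof -
  obtain \<alpha> \<beta> \<alpha>' \<beta>' where "u = arc_elt b n \<alpha> \<beta>" "v = arc_elt b n \<alpha>' \<beta>'"
    using assms by (metis arc_memE)
  with assms show ?thesis by (auto simp: arc_elt_mem_arc_iff)
qed

lemma arc_ops [simp]:
  "gadd (arc a b) = radd" "gsmul (arc a b) = rsmul" "gzero (arc a b) = (0, 0)"
  "actx (arc a b) = rmul rx" "acty (arc a b) = rmul ry"
  by (simp_all add: arc_def shifted_submod_def)

lemma ry_mult_arc_mem:
  assumes "a < b" and "arc_elt b n \<alpha> \<beta> \<in> comp (arc a b) n"
  shows "rmul ry (arc_elt b n \<alpha> \<beta>) = arc_elt b (n - 1) \<alpha> \<beta>"
  using assms by (intro ry_mult_arc_elt) (auto simp: arc_elt_mem_arc_iff)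

lemma gmod_homD:
  assumes "gmod_hom M N f" and "m \<in> comp M n"
  shows gmod_hom_mem: "f n m \<in> comp N n"
    and gmod_hom_gsmul: "f n (gsmul M c m) = gsmul N c (f n m)"
    and gmod_hom_actx: "f (n + 1) (actx M m) = actx N (f n m)"
    and gmod_hom_acty: "f (n - 1) (acty M m) = acty N (f n m)"
  using assms unfolding gmod_hom_def by simp_all

lemma gmod_hom_gadd:
  assumes "gmod_hom M N f" and "m \<in> comp M n" and "m' \<in> comp M n"
  shows "f n (gadd M m m') = gadd N (f n m) (f n m')"
  using assms unfolding gmod_hom_def by simp

lemma gmod_hom_comp:
  assumes "gmod_hom M N \<phi>" and "gmod_hom N P \<psi>"
  shows "gmod_hom M P (\<lambda>n m. \<psi> n (\<phi> n m))"
  using assms unfolding gmod_hom_def by simp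

lemma dsum_simps [simp]:
  "comp (dsum M N) n = comp M n \<times> comp N n"
  "gadd (dsum M N) u v = (gadd M (fst u) (fst v), gadd N (snd u) (snd v))"
  "gsmul (dsum M N) c u = (gsmul M c (fst u), gsmul N c (snd u))"
  "gzero (dsum M N) = (gzero M, gzero N)"
  "actx (dsum M N) u = (actx M (fst u), actx N (snd u))"
  "acty (dsum M N) u = (acty M (fst u), acty N (snd u))"
  by (simp_all add: dsum_def)

lemma dsum_arc_memE:
  assumes "a1 < b1" and "a2 < b2" and "uv \<in> comp (dsum (arc a1 b1) (arc a2 b2)) n"
  obtains \<alpha> \<beta> \<gamma> \<delta> where "uv = (arc_elt b1 n \<alpha> \<beta>, arc_elt b2 n \<gamma> \<delta>)"
    and "a1 < n \<longrightarrow> \<alpha> = 0" and "b1 < n \<longrightarrow> \<beta> = 0"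
    and "a2 < n \<longrightarrow> \<gamma> = 0" and "b2 < n \<longrightarrow> \<delta> = 0"
proof -
  have "fst uv \<in> comp (arc a1 b1) n" and "snd uv \<in> comp (arc a2 b2) n"
    using assms(3) by auto
  obtain \<alpha> \<beta> where "fst uv = arc_elt b1 n \<alpha> \<beta>" "a1 < n \<longrightarrow> \<alpha> = 0" "b1 < n \<longrightarrow> \<beta> = 0"
    by (rule arc_memE[OF assms(1) \<open>fst uv \<in> _\<close>])
  moreover obtain \<gamma> \<delta> where "snd uv = arc_elt b2 n \<gamma> \<delta>" "a2 < n \<longrightarrow> \<gamma> = 0" "b2 < n \<longrightarrow> \<delta> = 0"
    by (rule arc_memE[OF assms(2) \<open>snd uv \<in> _\<close>])
  ultimately show ?thesis
    by (intro that[of \<alpha> \<beta> \<gamma> \<delta>]) (simp_all add: prod_eq_iff)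
qed

lemma gmod_hom_pair:
  assumes "gmod_hom M N \<phi>" and "gmod_hom M N' \<psi>"
  shows "gmod_hom M (dsum N N') (\<lambda>n m. (\<phi> n m, \<psi> n m))"
  using assms unfolding gmod_hom_def by simp

lemma gmod_hom_inl: "a < b \<Longrightarrow> gmod_hom M (dsum M (arc a b)) (\<lambda>n u. (u, (0, 0)))"
  by (simp add: gmod_hom_def)

lemma gmod_hom_inr: "a < b \<Longrightarrow> gmod_hom N (dsum (arc a b) N) (\<lambda>n v. ((0, 0), v))"
  by (simp add: gmod_hom_def)

lemma gmod_hom_copair_arc:
  assumes "a < b" and "gmod_hom M (arc a b) \<phi>" and "gmod_hom N (arc a b) \<psi>"
  shows "gmod_hom (dsum M N) (arc a b) (\<lambda>n uv. radd (\<phi> n (fst uv)) (\<psi> n (snd uv)))"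
proof -
  have "rmul r (radd u v) = radd (rmul r u) (rmul r v)"
    and "rsmul c (radd u v) = radd (rsmul c u) (rsmul c v)"
    and "radd (radd u v) (radd u' v') = radd (radd u u') (radd v v')"
    for r u v u' v' :: relt and c
    by (simp_all add: rmul_def rsmul_def radd_def algebra_simps smult_add_right)
  with assms show ?thesis
    unfolding gmod_hom_def by (auto simp: radd_mem_arc)
qed

text \<open>Multiplication by (p + s x y) y^(b'-b) \<in> R[y^-1], in the coordinates of \<^const>\<open>arc_elt\<close>.\<close>

definition arc_map :: "int \<Rightarrow> int \<Rightarrow> complex \<Rightarrow> complex \<Rightarrow> int \<Rightarrow> relt \<Rightarrow> relt" where
  "arc_map b b' p s n m = arc_elt b' n (p * ycoeff b n m) (s * ycoeff b n m + p * xcoeff b n m)"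

lemma arc_map_arc_elt [simp]:
  "arc_map b b' p s n (arc_elt b n \<alpha> \<beta>) = arc_elt b' n (p * \<alpha>) (s * \<alpha> + p * \<beta>)"
  by (simp add: arc_map_def)

lemma arc_map_zero [simp]: "arc_map b b' p s n (0, 0) = (0, 0)"
  by (simp add: arc_map_def ycoeff_def xcoeff_def)

lemma arc_map_id: "m \<in> comp (arc a b) n \<Longrightarrow> arc_map b b 1 0 n m = m"
  using arc_elt_coeffs[of m a b n] by (simp add: arc_map_def)

lemma gmod_hom_arc_map:
  assumes "a < b" and "a' < b'"
    and p: "p \<noteq> 0 \<Longrightarrow> a \<le> a' \<and> b \<le> b'" and s: "s \<noteq> 0 \<Longrightarrow> a \<le> b'"
  shows "gmod_hom (arc a b) (arc a' b') (arc_map b b' p s)"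
  unfolding gmod_hom_def
proof (intro conjI allI ballI)
  fix n m
  assume "m \<in> comp (arc a b) n"
  then obtain \<alpha> \<beta> where m: "m = arc_elt b n \<alpha> \<beta>" "a < n \<longrightarrow> \<alpha> = 0" "b < n \<longrightarrow> \<beta> = 0"
    using \<open>a < b\<close> by (elim arc_memE)
  show image: "arc_map b b' p s n m \<in> comp (arc a' b') n"
  proof -
    have "a' < n \<longrightarrow> p * \<alpha> = 0" and "b' < n \<longrightarrow> s * \<alpha> + p * \<beta> = 0"
      using m(2,3) p s by force+
    then show ?thesis using m(1) \<open>a' < b'\<close> by (simp add: arc_elt_mem_arc_iff)
  qed
  show "arc_map b b' p s (n + 1) (actx (arc a b) m) = actx (arc a' b') (arc_map b b' p s n m)"
    using m by simp
  show "arc_map b b' p s (n - 1) (acty (arc a b) m) = acty (arc a' b') (arc_map b b' p s n m)"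
    using m image \<open>a < b\<close> \<open>a' < b'\<close> by (simp add: ry_mult_arc_mem arc_elt_mem_arc_iff)
  show "arc_map b b' p s n (gsmul (arc a b) c m) = gsmul (arc a' b') c (arc_map b b' p s n m)" for c
    using m by (simp add: algebra_simps)
  show "arc_map b b' p s n (gadd (arc a b) m m')
      = gadd (arc a' b') (arc_map b b' p s n m) (arc_map b b' p s n m')"
    if m': "m' \<in> comp (arc a b) n" for m'
  proof -
    obtain \<alpha>' \<beta>' where "m' = arc_elt b n \<alpha>' \<beta>'"
      using m' \<open>a < b\<close> by (elim arc_memE)
    then show ?thesis using m by (simp add: algebra_simps)
  qed
qed

lemma arc_hom_zero:
  assumes "gmod_hom (arc a b) (arc a' b') \<phi>" and "a < b"
  shows "\<phi> n (0, 0) = (0, 0)"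
  using gmod_hom_gsmul[OF assms(1) zero_mem_arc[OF assms(2)], of n 0]
  by (simp add: rsmul_def)

lemma ycoeff_eq_0_if_rx_mult_eq_0:
  assumes "a < b" and "m \<in> comp (arc a b) n" and "rmul rx m = (0, 0)"
  shows "ycoeff b n m = 0"
  using assms by (elim arc_memE) auto

lemma arc_hom_kills_x_part:
  assumes hom: "gmod_hom (arc a b) (arc a' b') \<phi>" and "a < b" and "a' < b'" and "b' < b"
    and "n \<le> b"
  shows "\<phi> n (arc_elt b n 0 \<beta>) = (0, 0)"
  using \<open>n \<le> b\<close>
proof (induction n rule: int_le_induct)
  case base
  have "\<phi> b (arc_elt b b 0 \<beta>) \<in> comp (arc a' b') b"
    using \<open>a < b\<close> by (intro gmod_hom_mem[OF hom]) (simp add: arc_elt_mem_arc_iff)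
  with \<open>a' < b'\<close> \<open>b' < b\<close> show ?case by (auto elim!: arc_memE[OF \<open>a' < b'\<close>])
next
  case (step i)
  have "arc_elt b i 0 \<beta> \<in> comp (arc a b) i"
    using step.hyps \<open>a < b\<close> by (simp add: arc_elt_mem_arc_iff)
  from gmod_hom_acty[OF hom this] step show ?case by (simp add: ry_mult_arc_elt)
qed

lemma arc_hom_ycoeff_x_part:
  assumes hom: "gmod_hom (arc a b) (arc a' b') \<phi>" and "a < b" and "a' < b'"
    and mem: "arc_elt b n 0 \<beta> \<in> comp (arc a b) n"
  shows "ycoeff b' n (\<phi> n (arc_elt b n 0 \<beta>)) = 0"
proof (rule ycoeff_eq_0_if_rx_mult_eq_0[OF \<open>a' < b'\<close> gmod_hom_mem[OF hom mem]])
  show "rmul rx (\<phi> n (arc_elt b n 0 \<beta>)) = (0, 0)"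
    using gmod_hom_actx[OF hom mem] arc_hom_zero[OF hom \<open>a < b\<close>] by simp
qed

lemma arc_hom_ycoeff_y_part:
  assumes hom: "gmod_hom (arc a b) (arc a' b') \<phi>" and "a < b" and "a' < b'"
    and "a' \<le> a" and not_le: "\<not> (a \<le> a' \<and> b \<le> b')"
  shows "ycoeff b' a' (\<phi> a' (arc_elt b a' \<alpha> 0)) = 0"
proof (cases "a' < a")
  case True
  \<comment> \<open>the element is y times one of degree a'+1, where the target has no y-part\<close>
  have mem: "arc_elt b (a' + 1) \<alpha> 0 \<in> comp (arc a b) (a' + 1)"
    using True \<open>a < b\<close> by (simp add: arc_elt_mem_arc_iff)
  obtain \<beta>' where \<beta>': "\<phi> (a' + 1) (arc_elt b (a' + 1) \<alpha> 0) = arc_elt b' (a' + 1) 0 \<beta>'"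
    "arc_elt b' (a' + 1) 0 \<beta>' \<in> comp (arc a' b') (a' + 1)"
    using gmod_hom_mem[OF hom mem] \<open>a' < b'\<close> by (metis arc_memE less_add_one)
  have "\<phi> a' (arc_elt b a' \<alpha> 0) = \<phi> (a' + 1 - 1) (rmul ry (arc_elt b (a' + 1) \<alpha> 0))"
    using True \<open>a < b\<close> by (simp add: ry_mult_arc_elt)
  also have "\<dots> = rmul ry (arc_elt b' (a' + 1) 0 \<beta>')"
    using gmod_hom_acty[OF hom mem] \<beta>'(1) by simp
  also have "\<dots> = arc_elt b' a' 0 \<beta>'"
    using ry_mult_arc_mem[OF \<open>a' < b'\<close> \<beta>'(2)] by simp
  finally show ?thesis by simp
next
  case False
  \<comment> \<open>then b' < b, and x times the element lies in the x-part, which the map kills\<close>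
  with \<open>a' \<le> a\<close> not_le have "b' < b" by simp
  have mem: "arc_elt b a' \<alpha> 0 \<in> comp (arc a b) a'"
    using \<open>a' \<le> a\<close> \<open>a < b\<close> by (simp add: arc_elt_mem_arc_iff)
  show ?thesis
  proof (rule ycoeff_eq_0_if_rx_mult_eq_0[OF \<open>a' < b'\<close> gmod_hom_mem[OF hom mem]])
    show "rmul rx (\<phi> a' (arc_elt b a' \<alpha> 0)) = (0, 0)"
      using gmod_hom_actx[OF hom mem] \<open>a' \<le> a\<close> \<open>a < b\<close>
        arc_hom_kills_x_part[OF hom \<open>a < b\<close> \<open>a' < b'\<close> \<open>b' < b\<close>, of "a' + 1"]
      by simp
  qed
qed

lemma arc_hom_ycoeff_eq_0:
  assumes hom: "gmod_hom (arc a b) (arc a' b') \<phi>" and "a < b" and "a' < b'"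
    and u: "u \<in> comp (arc a b) a'"
    and "ycoeff b a' u = 0 \<or> \<not> (a \<le> a' \<and> b \<le> b')"
  shows "ycoeff b' a' (\<phi> a' u) = 0"
proof -
  obtain \<alpha> \<beta> where u_eq: "u = arc_elt b a' \<alpha> \<beta>" and "a < a' \<longrightarrow> \<alpha> = 0" and "b < a' \<longrightarrow> \<beta> = 0"
    using \<open>a < b\<close> u by (elim arc_memE)
  then have mem: "arc_elt b a' \<alpha> 0 \<in> comp (arc a b) a'" "arc_elt b a' 0 \<beta> \<in> comp (arc a b) a'"
    using \<open>a < b\<close> by (simp_all add: arc_elt_mem_arc_iff)
  have "\<phi> a' u = radd (\<phi> a' (arc_elt b a' \<alpha> 0)) (\<phi> a' (arc_elt b a' 0 \<beta>))"
    using gmod_hom_gadd[OF hom mem] u_eq by simp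
  moreover have "ycoeff b' a' (\<phi> a' (arc_elt b a' \<alpha> 0)) = 0"
  proof (cases "\<alpha> = 0")
    case True
    then show ?thesis using arc_hom_zero[OF hom \<open>a < b\<close>] by simp
  next
    case False
    with assms \<open>a < a' \<longrightarrow> \<alpha> = 0\<close> show ?thesis
      using arc_hom_ycoeff_y_part[OF hom \<open>a < b\<close> \<open>a' < b'\<close>] u_eq by fastforce
  qed
  ultimately show ?thesis
    using arc_hom_ycoeff_x_part[OF hom \<open>a < b\<close> \<open>a' < b'\<close> mem(2)] by simp
qed

lemma arc_ses_not_splits:
  assumes "a < b" and "a1 < b1" and "a2 < b2"
    and f: "gmod_hom (arc a b) (dsum (arc a1 b1) (arc a2 b2)) f"
    and "ycoeff b1 a (fst (f a (arc_elt b a 1 0))) = 0 \<or> \<not> (a1 \<le> a \<and> b1 \<le> b)"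
    and "ycoeff b2 a (snd (f a (arc_elt b a 1 0))) = 0 \<or> \<not> (a2 \<le> a \<and> b2 \<le> b)"
  shows "\<not> ses_splits (arc a b) (dsum (arc a1 b1) (arc a2 b2)) f"
proof
  let ?e = "arc_elt b a 1 0"
  assume "ses_splits (arc a b) (dsum (arc a1 b1) (arc a2 b2)) f"
  then obtain r where r: "gmod_hom (dsum (arc a1 b1) (arc a2 b2)) (arc a b) r"
    and retraction: "r a (f a ?e) = ?e"
    using \<open>a < b\<close> unfolding ses_splits_def by (force simp: arc_elt_mem_arc_iff)
  have r1: "gmod_hom (arc a1 b1) (arc a b) (\<lambda>n u. r n (u, (0, 0)))"
    using gmod_hom_comp[OF gmod_hom_inl[OF \<open>a2 < b2\<close>] r] .
  have r2: "gmod_hom (arc a2 b2) (arc a b) (\<lambda>n v. r n ((0, 0), v))"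
    using gmod_hom_comp[OF gmod_hom_inr[OF \<open>a1 < b1\<close>] r] .
  obtain u1 u2 where u: "f a ?e = (u1, u2)" by (cases "f a ?e")
  have u1: "u1 \<in> comp (arc a1 b1) a" and u2: "u2 \<in> comp (arc a2 b2) a"
    using gmod_hom_mem[OF f, of ?e a] u \<open>a < b\<close> by (auto simp: arc_elt_mem_arc_iff)
  have "r a (u1, u2) = radd (r a (u1, (0, 0))) (r a ((0, 0), u2))"
    using gmod_hom_gadd[OF r, of "(u1, (0, 0))" a "((0, 0), u2)"] u1 u2 \<open>a1 < b1\<close> \<open>a2 < b2\<close>
    by simp
  then have "ycoeff b a (r a (f a ?e)) = 0"
    using arc_hom_ycoeff_eq_0[OF r1 \<open>a1 < b1\<close> \<open>a < b\<close> u1]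
      arc_hom_ycoeff_eq_0[OF r2 \<open>a2 < b2\<close> \<open>a < b\<close> u2] assms(5,6) u
    by simp
  with retraction show False by simp
qed

definition crossing_f :: "int \<Rightarrow> int \<Rightarrow> int \<Rightarrow> relt \<Rightarrow> relt \<times> relt" where
  "crossing_f b d n m = (arc_map b b 1 0 n m, arc_map b d 1 0 n m)"

definition crossing_g :: "int \<Rightarrow> int \<Rightarrow> int \<Rightarrow> relt \<times> relt \<Rightarrow> relt" where
  "crossing_g b d n uv = radd (arc_map b d 1 0 n (fst uv)) (arc_map d d (-1) 0 n (snd uv))"

definition crossing_f' :: "int \<Rightarrow> int \<Rightarrow> int \<Rightarrow> relt \<Rightarrow> relt \<times> relt" where
  "crossing_f' c d n m = (arc_map d c 0 1 n m, arc_map d d 1 0 n m)"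

definition crossing_g' :: "int \<Rightarrow> int \<Rightarrow> int \<Rightarrow> int \<Rightarrow> relt \<times> relt \<Rightarrow> relt" where
  "crossing_g' b c d n uv = radd (arc_map c b 1 0 n (fst uv)) (arc_map d b 0 (-1) n (snd uv))"

context
  fixes a b c d :: int
  assumes ac: "a < c" and cb: "c < b" and bd: "b < d"
begin

private lemma ab: "a < b" and ad: "a < d" and cd: "c < d"
  using ac cb bd by simp_all

lemma gmod_hom_crossing_f: "gmod_hom (arc a b) (dsum (arc c b) (arc a d)) (crossing_f b d)"
  unfolding crossing_f_def using ac cb bd by (intro gmod_hom_pair gmod_hom_arc_map) auto

lemma gmod_hom_crossing_g: "gmod_hom (dsum (arc c b) (arc a d)) (arc c d) (crossing_g b d)"
  unfolding crossing_g_def using ac cb bd by (intro gmod_hom_copair_arc gmod_hom_arc_map) auto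

lemma gmod_hom_crossing_f': "gmod_hom (arc c d) (dsum (arc a c) (arc b d)) (crossing_f' c d)"
  unfolding crossing_f'_def using ac cb bd by (intro gmod_hom_pair gmod_hom_arc_map) auto

lemma gmod_hom_crossing_g': "gmod_hom (dsum (arc a c) (arc b d)) (arc a b) (crossing_g' b c d)"
  unfolding crossing_g'_def using ac cb bd by (intro gmod_hom_copair_arc gmod_hom_arc_map) auto

lemma crossing_g_kernel:
  "{uv \<in> comp (dsum (arc c b) (arc a d)) n. crossing_g b d n uv = (0, 0)}
     = crossing_f b d n ` comp (arc a b) n"
proof (intro equalityI subsetI)
  fix uv assume uv: "uv \<in> {uv \<in> comp (dsum (arc c b) (arc a d)) n. crossing_g b d n uv = (0, 0)}"
  then have "uv \<in> comp (dsum (arc c b) (arc a d)) n" by simp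
  then obtain \<alpha> \<beta> \<gamma> \<delta> where uv_eq: "uv = (arc_elt b n \<alpha> \<beta>, arc_elt d n \<gamma> \<delta>)"
    and "a < n \<longrightarrow> \<gamma> = 0" and "b < n \<longrightarrow> \<beta> = 0"
    by (elim dsum_arc_memE[OF cb ad])
  moreover have "\<gamma> = \<alpha>" and "\<delta> = \<beta>"
    using uv uv_eq by (simp_all add: crossing_g_def)
  ultimately show "uv \<in> crossing_f b d n ` comp (arc a b) n"
    using ab by (auto simp: crossing_f_def arc_elt_mem_arc_iff intro!: image_eqI[of _ _ "arc_elt b n \<alpha> \<beta>"])
next
  fix uv assume "uv \<in> crossing_f b d n ` comp (arc a b) n"
  then obtain m where m: "m \<in> comp (arc a b) n" and uv_eq: "uv = crossing_f b d n m" by blast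
  obtain \<alpha> \<beta> where "m = arc_elt b n \<alpha> \<beta>" by (rule arc_memE[OF ab m])
  with gmod_hom_mem[OF gmod_hom_crossing_f m] uv_eq
  show "uv \<in> {uv \<in> comp (dsum (arc c b) (arc a d)) n. crossing_g b d n uv = (0, 0)}"
    by (simp add: crossing_f_def crossing_g_def)
qed

lemma crossing_g_surj: "crossing_g b d n ` comp (dsum (arc c b) (arc a d)) n = comp (arc c d) n"
proof (intro equalityI subsetI)
  fix w assume "w \<in> crossing_g b d n ` comp (dsum (arc c b) (arc a d)) n"
  then show "w \<in> comp (arc c d) n" using gmod_hom_mem[OF gmod_hom_crossing_g] by blast
next
  fix w assume "w \<in> comp (arc c d) n"
  then obtain \<alpha> \<beta> where w: "w = arc_elt d n \<alpha> \<beta>" "c < n \<longrightarrow> \<alpha> = 0" "d < n \<longrightarrow> \<beta> = 0"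
    by (rule arc_memE[OF cd])
  show "w \<in> crossing_g b d n ` comp (dsum (arc c b) (arc a d)) n"
  proof (cases "n \<le> b")
    case True
    with w cb ad have "(arc_elt b n \<alpha> \<beta>, (0, 0)) \<in> comp (dsum (arc c b) (arc a d)) n"
      by (simp add: arc_elt_mem_arc_iff)
    then show ?thesis by (rule rev_image_eqI) (use w in \<open>simp add: crossing_g_def\<close>)
  next
    case False
    with w ac cb ad have "((0, 0), arc_elt d n 0 (- \<beta>)) \<in> comp (dsum (arc c b) (arc a d)) n"
      by (simp add: arc_elt_mem_arc_iff)
    then show ?thesis by (rule rev_image_eqI) (use w False ac cb in \<open>simp add: crossing_g_def\<close>)
  qed
qed

lemma crossing_g'_kernel:
  "{uv \<in> comp (dsum (arc a c) (arc b d)) n. crossing_g' b c d n uv = (0, 0)}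
     = crossing_f' c d n ` comp (arc c d) n"
proof (intro equalityI subsetI)
  fix uv assume uv: "uv \<in> {uv \<in> comp (dsum (arc a c) (arc b d)) n. crossing_g' b c d n uv = (0, 0)}"
  then have "uv \<in> comp (dsum (arc a c) (arc b d)) n" by simp
  then obtain \<alpha> \<beta> \<gamma> \<delta> where uv_eq: "uv = (arc_elt c n \<alpha> \<beta>, arc_elt d n \<gamma> \<delta>)"
    and "c < n \<longrightarrow> \<beta> = 0" and "d < n \<longrightarrow> \<delta> = 0"
    by (elim dsum_arc_memE[OF ac bd])
  moreover have "\<alpha> = 0" and "\<gamma> = \<beta>"
    using uv uv_eq by (simp_all add: crossing_g'_def)
  ultimately show "uv \<in> crossing_f' c d n ` comp (arc c d) n"
    using cd by (auto simp: crossing_f'_def arc_elt_mem_arc_iff intro!: image_eqI[of _ _ "arc_elt d n \<gamma> \<delta>"])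
next
  fix uv assume "uv \<in> crossing_f' c d n ` comp (arc c d) n"
  then obtain m where m: "m \<in> comp (arc c d) n" and uv_eq: "uv = crossing_f' c d n m" by blast
  obtain \<alpha> \<beta> where "m = arc_elt d n \<alpha> \<beta>" by (rule arc_memE[OF cd m])
  with gmod_hom_mem[OF gmod_hom_crossing_f' m] uv_eq
  show "uv \<in> {uv \<in> comp (dsum (arc a c) (arc b d)) n. crossing_g' b c d n uv = (0, 0)}"
    by (simp add: crossing_f'_def crossing_g'_def)
qed

lemma crossing_g'_surj: "crossing_g' b c d n ` comp (dsum (arc a c) (arc b d)) n = comp (arc a b) n"
proof (intro equalityI subsetI)
  fix w assume "w \<in> crossing_g' b c d n ` comp (dsum (arc a c) (arc b d)) n"
  then show "w \<in> comp (arc a b) n" using gmod_hom_mem[OF gmod_hom_crossing_g'] by blast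
next
  fix w assume "w \<in> comp (arc a b) n"
  then obtain \<alpha> \<beta> where w: "w = arc_elt b n \<alpha> \<beta>" "a < n \<longrightarrow> \<alpha> = 0" "b < n \<longrightarrow> \<beta> = 0"
    by (rule arc_memE[OF ab])
  with ac bd have "(arc_elt c n \<alpha> 0, arc_elt d n (- \<beta>) 0) \<in> comp (dsum (arc a c) (arc b d)) n"
    by (simp add: arc_elt_mem_arc_iff)
  then show "w \<in> crossing_g' b c d n ` comp (dsum (arc a c) (arc b d)) n"
    by (rule rev_image_eqI) (use w in \<open>simp add: crossing_g'_def\<close>)
qed

lemma crossing_short_exact:
  "short_exact (arc a b) (dsum (arc c b) (arc a d)) (arc c d) (crossing_f b d) (crossing_g b d)"
proof -
  have "inj_on (crossing_f b d n) (comp (arc a b) n)" for n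
    by (intro inj_on_inverseI[where g = fst]) (simp add: crossing_f_def arc_map_id)
  then show ?thesis
    unfolding short_exact_def
    using gmod_hom_crossing_f gmod_hom_crossing_g crossing_g_kernel crossing_g_surj by simp
qed

lemma crossing_short_exact':
  "short_exact (arc c d) (dsum (arc a c) (arc b d)) (arc a b) (crossing_f' c d) (crossing_g' b c d)"
proof -
  have "inj_on (crossing_f' c d n) (comp (arc c d) n)" for n
    by (intro inj_on_inverseI[where g = "arc_map d d 1 0 n \<circ> snd"])
      (simp add: crossing_f'_def arc_map_id)
  then show ?thesis
    unfolding short_exact_def
    using gmod_hom_crossing_f' gmod_hom_crossing_g' crossing_g'_kernel crossing_g'_surj by simp
qed

lemma crossing_not_splits: "\<not> ses_splits (arc a b) (dsum (arc c b) (arc a d)) (crossing_f b d)"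
  using ac cb ad bd
  by (intro arc_ses_not_splits gmod_hom_crossing_f) (auto simp: crossing_f_def)

lemma crossing_not_splits': "\<not> ses_splits (arc c d) (dsum (arc a c) (arc b d)) (crossing_f' c d)"
  using ac cd bd cb
  by (intro arc_ses_not_splits gmod_hom_crossing_f') (auto simp: crossing_f'_def)

end

theorem lemma4p4:
  fixes a b c d :: int
  assumes "a < c" and "c < b" and "b < d"
  shows "(\<exists>f g. short_exact (arc a b) (dsum (arc c b) (arc a d)) (arc c d) f g
              \<and> \<not> ses_splits (arc a b) (dsum (arc c b) (arc a d)) f)
       \<and> (\<exists>f' g'. short_exact (arc c d) (dsum (arc a c) (arc b d)) (arc a b) f' g'
              \<and> \<not> ses_splits (arc c d) (dsum (arc a c) (arc b d)) f')"
  using crossing_short_exact[OF assms] crossing_not_splits[OF assms]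
    crossing_short_exact'[OF assms] crossing_not_splits'[OF assms]
  by blast

end
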